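(* Let $(X,T),(Y,S)$ be topological dynamical systems, let $y_0\in Y$ and $s_0\in\mathbb{N}$ with $S^{s_0}y_0=y_0$, and let $\nu=\frac1{s_0}\sum_{j=0}^{s_0-1}\delta_{S^jy_0}$. Then $$\mathcal{M}_{T\times S}(X\times Y)\cap(\pi_Y)_*^{-1}\{\nu\}=\Big\{\tfrac1{s_0}\sum_{j=0}^{s_0-1}(T\times S)^j_*(\mu\times\delta_{y_0}):\mu\in\mathcal{M}_{T^{s_0}}(X)\Big\}.$$ Consequently, for every $f\in C(X\times Y)$, $\psi_f(\nu)\ge\min_{x\in X}\frac1{s_0}\sum_{j=0}^{s_0-1}f(T^jx,S^jy_0)$.
   Context: A topological dynamical system $(X,T)$: $X$ compact metrizable, $T$ a homeomorphism; $\mathcal{M}_T(X)$ its invariant Borel probability measures. $\pi_Y(x,y)=y$. $\psi_f(\nu)=\min\{\int f\,d\lambda:\lambda\in\mathcal{M}_{T\times S}(X\times Y),(\pi_Y)_*\lambda=\nu\}$. *)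

theory Defs
  imports "HOL-Probability.Probability"
begin

definition tds :: "('a::metric_space \<Rightarrow> 'a) \<Rightarrow> bool" where
  "tds T \<longleftrightarrow> compact (UNIV :: 'a set) \<and> (\<exists>T'. homeomorphism UNIV UNIV T T')"

definition inv_measures :: "('a::topological_space \<Rightarrow> 'a) \<Rightarrow> 'a measure set" where
  "inv_measures T = {\<mu>. prob_space \<mu> \<and> sets \<mu> = sets borel \<and> distr \<mu> borel T = \<mu>}"

definition avg_measure :: "nat \<Rightarrow> (nat \<Rightarrow> 'a::topological_space measure) \<Rightarrow> 'a measure" where
  "avg_measure n \<mu>s = measure_of UNIV (sets borel)
     (\<lambda>A. (\<Sum>j<n. emeasure (\<mu>s j) A) / of_nat n)"

text \<open>\<open>\<psi>_f(\<nu>) = min { \<integral> f d\<lambda> : \<lambda> \<in> \<M>_{T\<times>S}(X\<times>Y), (\<pi>_Y)_* \<lambda> = \<nu> }\<close>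
  (the minimum is written as an infimum; it is attained).\<close>
definition psi :: "('a::topological_space \<Rightarrow> 'a) \<Rightarrow> ('b::topological_space \<Rightarrow> 'b)
    \<Rightarrow> ('a \<times> 'b \<Rightarrow> real) \<Rightarrow> 'b measure \<Rightarrow> real" where
  "psi T S f \<nu> = Inf {integral\<^sup>L m f | m. m \<in> inv_measures (map_prod T S) \<and> distr m borel snd = \<nu>}"

end

(*
  Let m be a (T x S)-invariant measure whose second marginal is the uniform measure nu on the
  periodic orbit of y0. Then m lives on X x orbit, its fibres over the orbit points have equal
  mass and are carried into each other by T x S. Hence the normalised fibre mu over y0 is
  invariant under T^s0, and spreading mu x delta_y0 along the orbit, i.e. averaging its images
  under (T x S)^j for j < s0, gives back m. Conversely every such average is invariant with
  marginal nu. Integrating f against these averages gives the lower bound for psi_f(nu); the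
  infimum defining psi_f(nu) is over a non-empty set because T^s0 has an invariant measure
  (Krylov-Bogolyubov), obtained here by regularising an invariant finitely additive mean.
*)

theory Submission
  imports Defs
begin

lemma emeasure_distr_borel:
  assumes "sets M = sets borel" and "f \<in> borel \<rightarrow>\<^sub>M borel" and "A \<in> sets borel"
  shows "emeasure (distr M borel f) A = emeasure M (f -` A)"
proof -
  have "space M = UNIV" using sets_eq_imp_space_eq[OF assms(1)] by simp
  moreover have "f \<in> M \<rightarrow>\<^sub>M borel" using assms(2) by (simp add: measurable_cong_sets[OF assms(1) refl])
  ultimately show ?thesis using assms(3) by (simp add: emeasure_distr)
qed

lemma inv_measuresD:
  assumes "m \<in> inv_measures R"
  shows "prob_space m" "sets m = sets borel" "space m = UNIV" "distr m borel R = m"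
proof -
  show "prob_space m" "sets m = sets borel" "distr m borel R = m"
    using assms by (simp_all add: inv_measures_def)
  then show "space m = UNIV" using sets_eq_imp_space_eq[of m borel] by simp
qed

lemma inv_measuresI:
  assumes "prob_space m" "sets m = sets borel" "R \<in> borel \<rightarrow>\<^sub>M borel"
    and "\<And>A. A \<in> sets borel \<Longrightarrow> emeasure m (R -` A) = emeasure m A"
  shows "m \<in> inv_measures R"
proof -
  have "distr m borel R = m"
    by (rule measure_eqI) (simp_all add: assms emeasure_distr_borel)
  with assms show ?thesis by (simp add: inv_measures_def)
qed

lemma emeasure_vimage_inv_measures:
  assumes "m \<in> inv_measures R" "R \<in> borel \<rightarrow>\<^sub>M borel" "A \<in> sets borel"
  shows "emeasure m (R -` A) = emeasure m A"
  using emeasure_distr_borel[OF inv_measuresD(2)[OF assms(1)] assms(2,3)] inv_measuresD(4)[OF assms(1)]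
  by simp

lemma emeasure_funpow_vimage_inv_measures:
  assumes "m \<in> inv_measures R" "R \<in> borel \<rightarrow>\<^sub>M borel" "A \<in> sets borel"
  shows "emeasure m ((R ^^ j) -` A) = emeasure m A"
  using assms(3)
proof (induction j arbitrary: A)
  case (Suc j)
  have "(R ^^ Suc j) -` A = (R ^^ j) -` (R -` A)"
    by (simp only: funpow.simps(2) vimage_comp)
  also have "emeasure m \<dots> = emeasure m (R -` A)"
    using Suc.IH measurable_sets_borel[OF assms(2) Suc.prems] .
  finally show ?case
    using emeasure_vimage_inv_measures[OF assms(1,2) Suc.prems] by (rule trans)
qed simp

lemma sets_avg_measure [simp]: "sets (avg_measure n M) = sets borel"
  by (simp add: avg_measure_def sets_measure_of_conv sets.sigma_sets_eq[of borel, simplified])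

lemma space_avg_measure [simp]: "space (avg_measure n M) = UNIV"
  using sets_eq_imp_space_eq[OF sets_avg_measure] by simp

lemma measurable_uniform_subprob_algebra:
  assumes "\<And>j. subprob_space (M j)" and "\<And>j. sets (M j) = sets N"
  shows "M \<in> measure_pmf (pmf_of_set {..<n}) \<rightarrow>\<^sub>M subprob_algebra N"
proof -
  have "M \<in> count_space UNIV \<rightarrow>\<^sub>M subprob_algebra N"
    using assms by (auto simp: measurable_count_space_eq1 space_subprob_algebra)
  then show ?thesis by (simp add: measurable_cong_sets)
qed

lemma emeasure_uniform_bind:
  assumes "n > 0" and "M \<in> measure_pmf (pmf_of_set {..<n}) \<rightarrow>\<^sub>M subprob_algebra N"
    and "A \<in> sets N"
  shows "emeasure (measure_pmf (pmf_of_set {..<n}) \<bind> M) A = (\<Sum>j<n. emeasure (M j) A) / of_nat n"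
proof -
  have "emeasure (measure_pmf (pmf_of_set {..<n}) \<bind> M) A
      = \<integral>\<^sup>+j. emeasure (M j) A \<partial>measure_pmf (pmf_of_set {..<n})"
    by (rule emeasure_bind[OF _ assms(2,3)]) simp
  also have "\<dots> = (\<Sum>j<n. emeasure (M j) A) / of_nat n"
    using assms(1) by (subst nn_integral_pmf_of_set) auto
  finally show ?thesis .
qed

lemma avg_measure_eq_bind:
  fixes M :: "nat \<Rightarrow> 'a::topological_space measure"
  assumes "n > 0" and "\<And>j. subprob_space (M j)" and "\<And>j. sets (M j) = sets borel"
  shows "avg_measure n M = measure_pmf (pmf_of_set {..<n}) \<bind> M"
proof -
  let ?p = "measure_pmf (pmf_of_set {..<n})"
  note meas = measurable_uniform_subprob_algebra[OF assms(2,3)]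
  have sets_bind: "sets (?p \<bind> M) = sets borel"
    using assms(3) by (simp add: sets_bind[of _ M, where N=borel])
  have "avg_measure n M = measure_of UNIV (sets borel) (emeasure (?p \<bind> M))"
    unfolding avg_measure_def
    by (intro measure_of_eq) (auto simp: emeasure_uniform_bind[OF assms(1) meas]
        sets.sigma_sets_eq[of borel, simplified])
  also have "\<dots> = ?p \<bind> M"
    using measure_of_of_measure[of "?p \<bind> M"] sets_eq_imp_space_eq[OF sets_bind]
    by (simp add: sets_bind)
  finally show ?thesis .
qed

lemma emeasure_avg_measure:
  fixes M :: "nat \<Rightarrow> 'a::topological_space measure"
  assumes "n > 0" and "\<And>j. subprob_space (M j)" and "\<And>j. sets (M j) = sets borel"
    and "A \<in> sets borel"
  shows "emeasure (avg_measure n M) A = (\<Sum>j<n. emeasure (M j) A) / of_nat n"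
  using emeasure_uniform_bind[OF assms(1) measurable_uniform_subprob_algebra[OF assms(2,3)] assms(4)]
  by (simp add: avg_measure_eq_bind[OF assms(1-3)])

lemma prob_space_avg_measure:
  fixes M :: "nat \<Rightarrow> 'a::topological_space measure"
  assumes "n > 0" and "\<And>j. prob_space (M j)" and "\<And>j. sets (M j) = sets borel"
  shows "prob_space (avg_measure n M)"
proof (rule prob_spaceI)
  have "emeasure (M j) UNIV = 1" for j
    using prob_space.emeasure_space_1[OF assms(2)] sets_eq_imp_space_eq[OF assms(3)] by simp
  then show "emeasure (avg_measure n M) (space (avg_measure n M)) = 1"
    using assms by (simp add: emeasure_avg_measure prob_space_imp_subprob_space
        ennreal_of_nat_eq_real_of_nat)
qed

lemma integral_avg_measure:
  fixes M :: "nat \<Rightarrow> 'a::topological_space measure" and f :: "'a \<Rightarrow> real"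
  assumes "n > 0" and "\<And>j. prob_space (M j)" and "\<And>j. sets (M j) = sets borel"
    and "f \<in> borel_measurable borel" and "\<And>x. \<bar>f x\<bar> \<le> B"
  shows "integral\<^sup>L (avg_measure n M) f = (\<Sum>j<n. integral\<^sup>L (M j) f) / n"
proof -
  let ?p = "measure_pmf (pmf_of_set {..<n})"
  have subprob: "subprob_space (M j)" for j by (simp add: assms(2) prob_space_imp_subprob_space)
  have "integral\<^sup>L (?p \<bind> M) f = \<integral>j. integral\<^sup>L (M j) f \<partial>?p"
    by (rule integral_bind[OF assms(4) _ measurable_uniform_subprob_algebra[OF subprob assms(3)],
          where B'=1 and B=B])
      (auto simp: assms(5) prob_space.emeasure_space_1[OF assms(2)] measure_pmf.finite_measure_axioms)
  also have "\<dots> = (\<Sum>j<n. integral\<^sup>L (M j) f) / n"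
    using assms(1) by (subst integral_pmf_of_set) auto
  finally show ?thesis by (simp add: avg_measure_eq_bind[OF assms(1) subprob assms(3)])
qed

section \<open>Borel sets of a product of compact metric spaces\<close>

lemma compact_metric_countable_basis:
  assumes "compact (UNIV :: 'a set)"
  obtains B :: "'a::metric_space set set" where "countable B" "\<And>b. b \<in> B \<Longrightarrow> open b"
    "\<And>U x. open U \<Longrightarrow> x \<in> U \<Longrightarrow> \<exists>b\<in>B. x \<in> b \<and> b \<subseteq> U"
proof -
  have "\<forall>n::nat. \<exists>k. finite k \<and> (UNIV::'a set) \<subseteq> (\<Union>x\<in>k. ball x (1 / Suc n))"
    using assms unfolding compact_eq_totally_bounded by simp
  then obtain k where k: "\<And>n. finite (k n)" "\<And>n. (UNIV::'a set) \<subseteq> (\<Union>x\<in>k n. ball x (1 / Suc n))"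
    by metis
  show ?thesis
  proof
    let ?B = "\<Union>n. (\<lambda>q. ball q (1 / Suc n)) ` k n"
    show "countable ?B" using k(1) by (intro countable_UN) (auto intro: countable_finite)
    show "open b" if "b \<in> ?B" for b using that by auto
    fix U :: "'a set" and x assume "open U" "x \<in> U"
    then obtain e where e: "e > 0" "ball x e \<subseteq> U" by (meson open_contains_ball)
    then obtain n :: nat where "inverse (Suc n) < e / 2"
      using reals_Archimedean half_gt_zero by blast
    then have n: "2 / Suc n < e" by (simp add: field_simps)
    obtain q where q: "q \<in> k n" "x \<in> ball q (1 / Suc n)" using k(2)[of n] by blast
    have "ball q (1 / Suc n) \<subseteq> ball x e"
    proof
      fix z assume "z \<in> ball q (1 / Suc n)"
      then have "dist x z < 2 / Suc n" using q(2) dist_triangle2[of x z q]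
        by (auto simp: mem_ball dist_commute)
      then show "z \<in> ball x e" using n by (simp add: mem_ball)
    qed
    then show "\<exists>b\<in>?B. x \<in> b \<and> b \<subseteq> U" using q e by blast
  qed
qed

lemma sets_pair_borel_compact:
  assumes "compact (UNIV :: 'a::metric_space set)" "compact (UNIV :: 'b::metric_space set)"
  shows "sets (borel \<Otimes>\<^sub>M borel) = sets (borel :: ('a \<times> 'b) measure)"
proof
  obtain BA :: "'a set set" where BA: "countable BA" "\<And>b. b \<in> BA \<Longrightarrow> open b"
    "\<And>U x. open U \<Longrightarrow> x \<in> U \<Longrightarrow> \<exists>b\<in>BA. x \<in> b \<and> b \<subseteq> U"
    using compact_metric_countable_basis[OF assms(1)] by blast
  obtain BB :: "'b set set" where BB: "countable BB" "\<And>b. b \<in> BB \<Longrightarrow> open b"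
    "\<And>U x. open U \<Longrightarrow> x \<in> U \<Longrightarrow> \<exists>b\<in>BB. x \<in> b \<and> b \<subseteq> U"
    using compact_metric_countable_basis[OF assms(2)] by blast
  have "id \<in> (borel \<Otimes>\<^sub>M borel :: ('a \<times> 'b) measure) \<rightarrow>\<^sub>M borel"
  proof (rule borel_measurableI)
    fix W :: "('a \<times> 'b) set" assume W: "open W"
    define C where "C = {(a, b). a \<in> BA \<and> b \<in> BB \<and> a \<times> b \<subseteq> W}"
    have "W = (\<Union>(a, b)\<in>C. a \<times> b)"
    proof
      show "W \<subseteq> (\<Union>(a, b)\<in>C. a \<times> b)"
      proof
        fix z assume "z \<in> W"
        then obtain A B where AB: "open A" "open B" "fst z \<in> A" "snd z \<in> B" "A \<times> B \<subseteq> W"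
          using open_prod_elim[OF W] by (metis SigmaD1 SigmaD2 prod.collapse)
        obtain a where a: "a \<in> BA" "fst z \<in> a" "a \<subseteq> A" using BA(3)[OF AB(1) AB(3)] by blast
        obtain b where b: "b \<in> BB" "snd z \<in> b" "b \<subseteq> B" using BB(3)[OF AB(2) AB(4)] by blast
        have "(a, b) \<in> C" using a b AB(5) unfolding C_def by blast
        then show "z \<in> (\<Union>(a, b)\<in>C. a \<times> b)" using a b by (auto intro!: bexI[of _ "(a, b)"] mem_Times_iff[THEN iffD2])
      qed
    qed (auto simp: C_def)
    moreover have "countable C"
      by (rule countable_subset[of _ "BA \<times> BB"]) (auto simp: C_def BA BB)
    moreover have "a \<times> b \<in> sets (borel \<Otimes>\<^sub>M borel)" if "(a, b) \<in> C" for a b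
      using that BA(2) BB(2) unfolding C_def by (auto intro!: pair_measureI)
    ultimately have "W \<in> sets (borel \<Otimes>\<^sub>M borel :: ('a \<times> 'b) measure)"
      by (metis (no_types, lifting) sets.countable_UN' case_prod_unfold image_subset_iff prod.collapse)
    then show "id -` W \<inter> space (borel \<Otimes>\<^sub>M borel) \<in> sets (borel \<Otimes>\<^sub>M borel)"
      by (simp add: space_pair_measure)
  qed
  from measurable_sets[OF this] show "sets (borel :: ('a \<times> 'b) measure) \<subseteq> sets (borel \<Otimes>\<^sub>M borel)"
    by (auto simp: space_pair_measure)
  have "id \<in> borel \<rightarrow>\<^sub>M (borel \<Otimes>\<^sub>M borel :: ('a \<times> 'b) measure)"
    by (simp add: measurable_pair_iff borel_measurable_continuous_onI continuous_on_fst
        continuous_on_snd continuous_on_id)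
  from measurable_sets[OF this] show "sets (borel \<Otimes>\<^sub>M borel) \<subseteq> sets (borel :: ('a \<times> 'b) measure)"
    by (auto simp: space_pair_measure)
qed

section \<open>Krylov--Bogolyubov\<close>

lemma closed_subset_Un_open_split:
  fixes K :: "'a::t4_space set"
  assumes "closed K" "K \<subseteq> U \<union> V" "open U" "open V"
  obtains K1 K2 where "closed K1" "closed K2" "K1 \<subseteq> U" "K2 \<subseteq> V" "K = K1 \<union> K2"
proof -
  have "closed (K - U)" "closed (K - V)" "(K - U) \<inter> (K - V) = {}"
    using assms by (auto intro: closed_Diff)
  then obtain U' V' where "open U'" "open V'" "K - U \<subseteq> U'" "K - V \<subseteq> V'" "U' \<inter> V' = {}"
    using t4_space by metis
  then show ?thesis
    by (intro that[of "K - U'" "K - V'"]) (auto intro: closed_Diff \<open>closed K\<close>)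
qed

lemma cluster_point_unit_cube:
  fixes a :: "nat \<Rightarrow> 'x \<Rightarrow> real"
  assumes "\<And>n x. a n x \<in> {0..1}"
  obtains p where "\<And>x. p x \<in> {0..1}"
    "\<And>e F N. e > 0 \<Longrightarrow> finite F \<Longrightarrow> \<exists>n\<ge>N. \<forall>x\<in>F. \<bar>a n x - p x\<bar> < e"
proof -
  define K :: "('x \<Rightarrow> real) set" where "K = PiE UNIV (\<lambda>_. {0..1})"
  have "compactin (product_topology (\<lambda>_. euclidean) UNIV) K"
    unfolding K_def by (subst compactin_PiE) auto
  then have "compact K" by (simp add: euclidean_product_topology)
  moreover have "filtermap a sequentially \<noteq> bot" by (simp add: filtermap_bot_iff)
  moreover have "eventually (\<lambda>f. f \<in> K) (filtermap a sequentially)"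
    using assms by (simp add: eventually_filtermap K_def PiE_UNIV_domain)
  ultimately obtain p where p: "p \<in> K" "inf (nhds p) (filtermap a sequentially) \<noteq> bot"
    unfolding compact_filter by blast
  show ?thesis
  proof
    show "p x \<in> {0..1}" for x using p(1) unfolding K_def PiE_UNIV_domain by blast
    fix e :: real and N and F :: "'x set" assume "e > 0" "finite F"
    define W where "W = {f. \<forall>x\<in>F. f (id x) \<in> ball (p x) e}"
    have "open W" unfolding W_def using \<open>finite F\<close> by (rule product_topology_basis') auto
    then have "eventually (\<lambda>f. f \<in> W) (nhds p)"
      using \<open>e > 0\<close> by (intro eventually_nhds_in_open) (auto simp: W_def)
    show "\<exists>n\<ge>N. \<forall>x\<in>F. \<bar>a n x - p x\<bar> < e"
    proof (rule ccontr)
      assume "\<not> ?thesis"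
      then have "eventually (\<lambda>f. f \<notin> W) (filtermap a sequentially)"
        unfolding eventually_filtermap eventually_sequentially W_def
        by (auto simp: dist_real_def abs_minus_commute)
      with \<open>eventually (\<lambda>f. f \<in> W) (nhds p)\<close> have "eventually (\<lambda>_. False) (inf (nhds p) (filtermap a sequentially))"
        unfolding eventually_inf by blast
      with p(2) show False by (simp add: eventually_False)
    qed
  qed
qed

lemma sum_indicator_vimage_orbit_diff:
  fixes R :: "'a \<Rightarrow> 'a"
  shows "\<bar>(\<Sum>k<n. indicator (R -` A) ((R ^^ k) x)) - (\<Sum>k<n. indicator A ((R ^^ k) x))\<bar> \<le> (1::real)"
proof -
  define g where "g k = (indicator A ((R ^^ k) x) :: real)" for k
  have "(\<Sum>k<n. indicator (R -` A) ((R ^^ k) x)) - (\<Sum>k<n. indicator A ((R ^^ k) x))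
      = (\<Sum>k<n. g (Suc k) - g k)"
    by (simp add: g_def sum_subtractf indicator_vimage[abs_def])
  also have "\<dots> = g n - g 0" by (rule sum_lessThan_telescope)
  finally show ?thesis by (simp add: g_def indicator_def)
qed

lemma sum_geometric_halves: "(\<Sum>i<N. e / 2 ^ Suc i) = e - e / 2 ^ N" for e :: real
  by (induction N) (auto simp: field_simps)

text \<open>Any cluster point of the Cesaro averages of indicator functions along a single orbit, taken in
  the compact product of one copy of \<open>[0,1]\<close> per subset, is an invariant finitely additive mean.\<close>

lemma invariant_finitely_additive_mean:
  fixes R :: "'a \<Rightarrow> 'a"
  obtains m :: "'a set \<Rightarrow> real" where "\<And>A. 0 \<le> m A" "m UNIV = 1"
    "\<And>A B. A \<inter> B = {} \<Longrightarrow> m (A \<union> B) = m A + m B" "\<And>A. m (R -` A) = m A"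
proof -
  define a where "a n A = (\<Sum>k<Suc n. indicator A ((R ^^ k) undefined)) / real (Suc n)" for n A
  have "a n A \<in> {0..1}" for n A
  proof -
    have "(\<Sum>k<Suc n. indicator A ((R ^^ k) undefined) :: real) \<le> (\<Sum>k<Suc n. 1)"
      by (intro sum_mono) (simp add: indicator_def)
    then show ?thesis by (simp add: a_def sum_nonneg)
  qed
  then obtain p where p01: "\<And>A. p A \<in> {0..1}"
    and near: "\<And>e F N. e > 0 \<Longrightarrow> finite F \<Longrightarrow> \<exists>n\<ge>N. \<forall>A\<in>F. \<bar>a n A - p A\<bar> < e"
    using cluster_point_unit_cube[of a] by blast
  have eq_if_near: "x = y" if "\<And>e. e > 0 \<Longrightarrow> \<bar>x - y\<bar> < 3 * e" for x y :: real
    using that[of "\<bar>x - y\<bar> / 3"] by force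
  show ?thesis
  proof
    show "0 \<le> p A" for A using p01[of A] by auto
    show "p UNIV = 1"
    proof (rule eq_if_near)
      fix e :: real assume "e > 0"
      then obtain n where "\<bar>a n UNIV - p UNIV\<bar> < e" using near[of e "{UNIV}" 0] by auto
      moreover have "a n UNIV = 1" by (simp add: a_def)
      ultimately show "\<bar>p UNIV - 1\<bar> < 3 * e" using \<open>e > 0\<close> by linarith
    qed
    show "p (A \<union> B) = p A + p B" if "A \<inter> B = {}" for A B
    proof (rule eq_if_near)
      fix e :: real assume "e > 0"
      then obtain n where n: "\<forall>C\<in>{A \<union> B, A, B}. \<bar>a n C - p C\<bar> < e"
        using near[of e "{A \<union> B, A, B}" 0] by auto
      have "indicator (A \<union> B) x = (indicator A x + indicator B x :: real)" for x
        using that by (auto simp: indicator_def)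
      then have "a n (A \<union> B) = a n A + a n B"
        unfolding a_def by (simp only: sum.distrib add_divide_distrib)
      then show "\<bar>p (A \<union> B) - (p A + p B)\<bar> < 3 * e" using n by auto
    qed
    show "p (R -` A) = p A" for A
    proof (rule eq_if_near)
      fix e :: real assume "e > 0"
      then obtain N :: nat where N: "inverse (Suc N) < e" using reals_Archimedean by blast
      obtain n where n: "n \<ge> N" "\<forall>C\<in>{R -` A, A}. \<bar>a n C - p C\<bar> < e"
        using near[OF \<open>e > 0\<close>, of "{R -` A, A}" N] by auto
      have "\<bar>a n (R -` A) - a n A\<bar> \<le> 1 / real (Suc n)"
        using sum_indicator_vimage_orbit_diff[of R A undefined "Suc n"]
        by (simp add: a_def abs_divide divide_right_mono flip: diff_divide_distrib)
      also have "\<dots> \<le> inverse (Suc N)" using n(1) by (simp add: field_simps)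
      finally show "\<bar>p (R -` A) - p A\<bar> < 3 * e" using n N by auto
    qed
  qed
qed

text \<open>A finitely additive probability on all subsets is regularised from inside by closed sets and
  then from outside by open sets. On a compact space the outer function is countably subadditive
  and splits additively along open sets, so Caratheodory's construction yields a Borel measure.\<close>

locale finitely_additive_prob =
  fixes m :: "'a::t4_space set \<Rightarrow> real"
  assumes nonneg: "\<And>A. 0 \<le> m A" and m_UNIV: "m UNIV = 1"
    and additive: "\<And>A B. A \<inter> B = {} \<Longrightarrow> m (A \<union> B) = m A + m B"
    and compact_UNIV: "compact (UNIV :: 'a set)"
begin

lemma m_empty: "m {} = 0" using additive[of "{}" "{}"] by simp

lemma m_mono: "A \<subseteq> B \<Longrightarrow> m A \<le> m B"
  using additive[of A "B - A"] nonneg[of "B - A"] by (simp add: Un_absorb1)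

lemma m_le_1: "m A \<le> 1"
  using m_mono[of A UNIV] m_UNIV by simp

lemma m_subadditive: "m (A \<union> B) \<le> m A + m B"
proof -
  have "m (A \<union> B) = m A + m (B - A)" using additive[of A "B - A"] by simp
  also have "\<dots> \<le> m A + m B" using m_mono[of "B - A" B] by simp
  finally show ?thesis .
qed

definition inner_reg :: "'a set \<Rightarrow> real" where
  "inner_reg U = Sup {m K | K. closed K \<and> K \<subseteq> U}"

lemma inner_reg_set_nonempty: "{m K | K. closed K \<and> K \<subseteq> U} \<noteq> {}" by auto

lemma inner_reg_set_bdd: "bdd_above {m K | K. closed K \<and> K \<subseteq> U}"
  using m_le_1 by (auto intro!: bdd_aboveI[of _ 1])

lemma inner_reg_upper: "closed K \<Longrightarrow> K \<subseteq> U \<Longrightarrow> m K \<le> inner_reg U"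
  unfolding inner_reg_def by (rule cSup_upper[OF _ inner_reg_set_bdd]) auto

lemma inner_reg_least: "(\<And>K. closed K \<Longrightarrow> K \<subseteq> U \<Longrightarrow> m K \<le> c) \<Longrightarrow> inner_reg U \<le> c"
  unfolding inner_reg_def by (rule cSup_least[OF inner_reg_set_nonempty]) auto

lemma inner_reg_approx:
  assumes "e > 0" obtains K where "closed K" "K \<subseteq> U" "inner_reg U - e < m K"
proof -
  have "inner_reg U - e < Sup {m K | K. closed K \<and> K \<subseteq> U}" using assms by (simp add: inner_reg_def)
  from less_cSupD[OF inner_reg_set_nonempty this] that show ?thesis by blast
qed

lemma inner_reg_nonneg: "0 \<le> inner_reg U" using inner_reg_upper[of "{}" U] m_empty by simp

lemma inner_reg_le_1: "inner_reg U \<le> 1" by (rule inner_reg_least) (rule m_le_1)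

lemma inner_reg_mono: "U \<subseteq> V \<Longrightarrow> inner_reg U \<le> inner_reg V"
  by (rule inner_reg_least) (auto intro: inner_reg_upper)

definition outer_reg :: "'a set \<Rightarrow> real" where
  "outer_reg A = Inf {inner_reg U | U. open U \<and> A \<subseteq> U}"

lemma outer_reg_set_nonempty: "{inner_reg U | U. open U \<and> A \<subseteq> U} \<noteq> {}" by auto

lemma outer_reg_set_bdd: "bdd_below {inner_reg U | U. open U \<and> A \<subseteq> U}"
  using inner_reg_nonneg by (auto intro!: bdd_belowI[of _ 0])

lemma outer_reg_lower: "open U \<Longrightarrow> A \<subseteq> U \<Longrightarrow> outer_reg A \<le> inner_reg U"
  unfolding outer_reg_def by (rule cInf_lower[OF _ outer_reg_set_bdd]) auto

lemma outer_reg_greatest: "(\<And>U. open U \<Longrightarrow> A \<subseteq> U \<Longrightarrow> c \<le> inner_reg U) \<Longrightarrow> c \<le> outer_reg A"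
  unfolding outer_reg_def by (rule cInf_greatest[OF outer_reg_set_nonempty]) auto

lemma outer_reg_approx:
  assumes "e > 0" obtains U where "open U" "A \<subseteq> U" "inner_reg U < outer_reg A + e"
proof -
  have "Inf {inner_reg U | U. open U \<and> A \<subseteq> U} < outer_reg A + e" using assms by (simp add: outer_reg_def)
  from cInf_lessD[OF outer_reg_set_nonempty this] that show ?thesis by blast
qed

lemma outer_reg_nonneg: "0 \<le> outer_reg A" by (rule outer_reg_greatest) (rule inner_reg_nonneg)

lemma outer_reg_mono: "A \<subseteq> B \<Longrightarrow> outer_reg A \<le> outer_reg B"
  by (rule outer_reg_greatest) (auto intro: outer_reg_lower)

lemma outer_reg_open: "open U \<Longrightarrow> outer_reg U = inner_reg U"
  using outer_reg_lower[of U U] outer_reg_greatest[of U "inner_reg U"] inner_reg_mono by (simp add: order_antisym)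

lemma outer_reg_empty: "outer_reg {} = 0"
proof -
  have "inner_reg {} \<le> 0" by (rule inner_reg_least) (simp add: m_empty)
  then show ?thesis using outer_reg_lower[of "{}" "{}"] outer_reg_nonneg[of "{}"] by simp
qed

lemma outer_reg_UNIV: "outer_reg UNIV = 1"
  using outer_reg_open[of UNIV] inner_reg_upper[of UNIV UNIV] inner_reg_le_1[of UNIV] m_UNIV by simp

lemma m_le_inner_reg_Un:
  assumes "closed K" "K \<subseteq> U \<union> V" "open U" "open V"
  shows "m K \<le> inner_reg U + inner_reg V"
proof -
  obtain K1 K2 where "closed K1" "closed K2" "K1 \<subseteq> U" "K2 \<subseteq> V" "K = K1 \<union> K2"
    using closed_subset_Un_open_split[OF assms] by blast
  then show ?thesis
    using m_subadditive[of K1 K2] inner_reg_upper[of K1 U] inner_reg_upper[of K2 V] by simp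
qed

lemma m_le_sum_inner_reg:
  fixes N :: nat
  assumes "closed K" "K \<subseteq> (\<Union>i<N. U i)" "\<And>i. open (U i)"
  shows "m K \<le> (\<Sum>i<N. inner_reg (U i))"
  using assms(1,2)
proof (induction N arbitrary: K)
  case 0
  then show ?case using m_empty by simp
next
  case (Suc N)
  have o: "open (\<Union>i<N. U i)" using assms(3) by auto
  have "K \<subseteq> (\<Union>i<N. U i) \<union> U N" using Suc.prems(2) by (auto simp: lessThan_Suc)
  then have "m K \<le> inner_reg (\<Union>i<N. U i) + inner_reg (U N)"
    by (rule m_le_inner_reg_Un[OF Suc.prems(1) _ o assms(3)])
  moreover have "inner_reg (\<Union>i<N. U i) \<le> (\<Sum>i<N. inner_reg (U i))"
    by (rule inner_reg_least) (rule Suc.IH)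
  ultimately show ?case by simp
qed

lemma m_le_sum_inner_reg_countable:
  fixes U :: "nat \<Rightarrow> 'a set"
  assumes "closed K" "K \<subseteq> (\<Union>i. U i)" "\<And>i. open (U i)"
  obtains N where "m K \<le> (\<Sum>i<N. inner_reg (U i))"
proof -
  have "compact K" using compact_Int_closed[OF compact_UNIV assms(1)] by simp
  then obtain C where C: "C \<subseteq> UNIV" "finite C" "K \<subseteq> (\<Union>i\<in>C. U i)"
    using compactE_image[of K UNIV U] assms(2,3) by blast
  define N where "N = Suc (Max (insert 0 C))"
  have "C \<subseteq> {..<N}" using C(2) by (auto simp: N_def less_Suc_eq_le)
  then have "K \<subseteq> (\<Union>i<N. U i)" using C(3) by blast
  from m_le_sum_inner_reg[OF assms(1) this assms(3)] show ?thesis by (rule that)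
qed

lemma outer_reg_subadditive: "outer_reg (A \<union> B) \<le> outer_reg A + outer_reg B"
proof (rule field_le_epsilon)
  fix e :: real assume e: "e > 0"
  then have e2: "e / 2 > 0" by simp
  obtain U where U: "open U" "A \<subseteq> U" "inner_reg U < outer_reg A + e / 2"
    using outer_reg_approx[OF e2] by blast
  obtain V where V: "open V" "B \<subseteq> V" "inner_reg V < outer_reg B + e / 2"
    using outer_reg_approx[OF e2] by blast
  have "outer_reg (A \<union> B) \<le> inner_reg (U \<union> V)"
    using U V by (intro outer_reg_lower) auto
  also have "\<dots> \<le> inner_reg U + inner_reg V"
    by (rule inner_reg_least) (use m_le_inner_reg_Un U(1) V(1) in blast)
  finally show "outer_reg (A \<union> B) \<le> outer_reg A + outer_reg B + e"
    using U(3) V(3) by simp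
qed

lemma outer_reg_countably_subadditive:
  fixes A :: "nat \<Rightarrow> 'a set"
  shows "ennreal (outer_reg (\<Union>i. A i)) \<le> (\<Sum>i. ennreal (outer_reg (A i)))"
proof (rule ennreal_le_epsilon)
  fix e :: real
  assume s: "(\<Sum>i. ennreal (outer_reg (A i))) < top" and e: "0 < e"
  obtain r where r: "(\<Sum>i. ennreal (outer_reg (A i))) = ennreal r" "0 \<le> r"
    using s by (cases "(\<Sum>i. ennreal (outer_reg (A i)))" rule: ennreal_cases) auto
  have "\<exists>U. open U \<and> A i \<subseteq> U \<and> inner_reg U < outer_reg (A i) + e / 2 ^ Suc i" for i
    using outer_reg_approx[of "e / 2 ^ Suc i" "A i"] e by (metis zero_less_divide_iff zero_less_numeral zero_less_power)
  then obtain U where U: "\<And>i. open (U i)" "\<And>i. A i \<subseteq> U i" "\<And>i. inner_reg (U i) < outer_reg (A i) + e / 2 ^ Suc i"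
    by metis
  have partial: "(\<Sum>i<N. outer_reg (A i)) \<le> r" for N
  proof -
    have "ennreal (\<Sum>i<N. outer_reg (A i)) = (\<Sum>i<N. ennreal (outer_reg (A i)))"
      by (simp add: outer_reg_nonneg)
    also have "\<dots> \<le> (\<Sum>i. ennreal (outer_reg (A i)))" by (rule sum_le_suminf) auto
    finally show ?thesis using r by (simp add: ennreal_le_iff)
  qed
  have "inner_reg (\<Union>i. U i) \<le> r + e"
  proof (rule inner_reg_least)
    fix K assume K: "closed K" "K \<subseteq> (\<Union>i. U i)"
    obtain N where N: "m K \<le> (\<Sum>i<N. inner_reg (U i))" using m_le_sum_inner_reg_countable[OF K U(1)] by blast
    also have "\<dots> \<le> (\<Sum>i<N. outer_reg (A i) + e / 2 ^ Suc i)" by (intro sum_mono less_imp_le U(3))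
    also have "\<dots> = (\<Sum>i<N. outer_reg (A i)) + (e - e / 2 ^ N)" by (simp only: sum.distrib sum_geometric_halves)
    also have "\<dots> \<le> r + e"
    proof -
      have "0 \<le> e / 2 ^ N" using e by simp
      then show ?thesis using partial[of N] by linarith
    qed
    finally show "m K \<le> r + e" .
  qed
  moreover have "outer_reg (\<Union>i. A i) \<le> inner_reg (\<Union>i. U i)" using U by (intro outer_reg_lower) auto
  ultimately have "outer_reg (\<Union>i. A i) \<le> r + e" by simp
  then have "ennreal (outer_reg (\<Union>i. A i)) \<le> ennreal (r + e)" by (rule ennreal_leI)
  then show "ennreal (outer_reg (\<Union>i. A i)) \<le> (\<Sum>i. ennreal (outer_reg (A i))) + ennreal e"
    using r e by (simp add: ennreal_plus)
qed

lemma outer_reg_split_open: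
  assumes U: "open U"
  shows "outer_reg (A \<inter> U) + outer_reg (A - U) = outer_reg A"
proof (rule order_antisym)
  show "outer_reg A \<le> outer_reg (A \<inter> U) + outer_reg (A - U)"
    using outer_reg_subadditive[of "A \<inter> U" "A - U"] by (simp add: Int_Diff_Un)
  show "outer_reg (A \<inter> U) + outer_reg (A - U) \<le> outer_reg A"
  proof (rule field_le_epsilon)
    fix e2 :: real assume e2: "e2 > 0"
    define e where "e = e2 / 2"
    have e: "e > 0" using e2 by (simp add: e_def)
    have "outer_reg (A \<inter> U) + outer_reg (A - U) - 2 * e \<le> outer_reg A"
    proof (rule outer_reg_greatest)
      fix V assume V: "open V" "A \<subseteq> V"
      obtain K where K: "closed K" "K \<subseteq> V \<inter> U" "inner_reg (V \<inter> U) - e < m K"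
        using inner_reg_approx[OF e] by blast
      have o1: "outer_reg (A \<inter> U) \<le> inner_reg (V \<inter> U)" using V U by (intro outer_reg_lower) auto
      have oVK: "open (V - K)" using V K by (intro open_Diff)
      obtain K' where K': "closed K'" "K' \<subseteq> V - K" "inner_reg (V - K) - e < m K'"
        using inner_reg_approx[OF e] by blast
      have o2: "outer_reg (A - U) \<le> inner_reg (V - K)" using V K oVK by (intro outer_reg_lower) auto
      have "m (K \<union> K') = m K + m K'" using K' by (intro additive) auto
      moreover have "m (K \<union> K') \<le> inner_reg V" using K K' by (intro inner_reg_upper) auto
      ultimately show "outer_reg (A \<inter> U) + outer_reg (A - U) - 2 * e \<le> inner_reg V" using o1 o2 K K' by simp
    qed
    then show "outer_reg (A \<inter> U) + outer_reg (A - U) \<le> outer_reg A + e2" by (simp add: e_def)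
  qed
qed

definition regularized :: "'a measure" where
  "regularized = measure_of UNIV (sets borel) (\<lambda>A. ennreal (outer_reg A))"

lemma sets_regularized: "sets regularized = sets borel"
  unfolding regularized_def by (simp add: sets_measure_of_conv sets.sigma_sets_eq[of borel, simplified])

lemma emeasure_regularized:
  assumes A: "A \<in> sets borel"
  shows "emeasure regularized A = ennreal (outer_reg A)"
proof -
  define f where "f A = ennreal (outer_reg A)" for A
  interpret P: sigma_algebra "UNIV :: 'a set" "Pow UNIV" by (rule sigma_algebra_Pow)
  have oms: "outer_measure_space (Pow UNIV) f"
    unfolding outer_measure_space_def positive_def increasing_def countably_subadditive_def f_def
    by (auto simp: outer_reg_empty intro!: ennreal_leI outer_reg_mono outer_reg_countably_subadditive)
  define L where "L = lambda_system UNIV (Pow UNIV) f"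
  have ms: "measure_space UNIV L f" unfolding L_def by (rule P.caratheodory_lemma[OF oms])
  then have saL: "sigma_algebra UNIV L" by (simp add: measure_space_def)
  have "{S. open S} \<subseteq> L"
  proof
    fix U :: "'a set" assume "U \<in> {S. open S}"
    then have U: "open U" by simp
    have "f (U \<inter> x) + f ((UNIV - U) \<inter> x) = f x" for x
    proof -
      have "(UNIV - U) \<inter> x = x - U" by auto
      then show ?thesis using outer_reg_split_open[OF U, of x]
        by (simp add: f_def Int_commute outer_reg_nonneg flip: ennreal_plus)
    qed
    then show "U \<in> L" by (simp add: L_def lambda_system_def)
  qed
  then have "sets borel \<subseteq> L" unfolding sets_borel by (rule sigma_algebra.sigma_sets_subset[OF saL])
  then have ms2: "measure_space UNIV (sets borel) f"
    using measure_down[OF ms _] sets.sigma_algebra_axioms[of borel] by simp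
  have fe: "(\<lambda>A. ennreal (outer_reg A)) = f" by (rule ext) (simp add: f_def)
  show ?thesis unfolding regularized_def fe
    using ms2 A sets.sigma_algebra_axioms[of borel]
    by (subst emeasure_measure_of_sigma) (auto simp: measure_space_def f_def)
qed

lemma prob_space_regularized: "prob_space regularized"
proof -
  have sp: "space regularized = UNIV" using sets_eq_imp_space_eq[OF sets_regularized] by simp
  show ?thesis by (rule prob_spaceI) (simp add: sp emeasure_regularized outer_reg_UNIV)
qed

context
  fixes R R'
  assumes homeo: "homeomorphism UNIV UNIV R R'" and m_vimage: "\<And>A. m (R -` A) = m A"
begin

lemma inner_reg_vimage: "inner_reg (R -` U) = inner_reg U"
proof -
  have RR': "R (R' y) = y" "R' (R y) = y" for y
    using homeomorphism_apply2[OF homeo] homeomorphism_apply1[OF homeo] by simp_all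
  have cont: "continuous_on UNIV R" "continuous_on UNIV R'"
    using homeomorphism_cont1[OF homeo] homeomorphism_cont2[OF homeo] .
  have "{m K |K. closed K \<and> K \<subseteq> R -` U} = {m K |K. closed K \<and> K \<subseteq> U}"
  proof (intro equalityI subsetI; clarify)
    fix K assume K: "closed K" "K \<subseteq> R -` U"
    show "\<exists>K'. m K = m K' \<and> closed K' \<and> K' \<subseteq> U"
    proof (intro exI conjI)
      have "R -` (R' -` K) = K" by (auto simp: RR')
      then show "m K = m (R' -` K)" using m_vimage[of "R' -` K"] by simp
      show "closed (R' -` K)" using closed_vimage[OF K(1) cont(2)] .
      show "R' -` K \<subseteq> U" using K(2) by (auto simp: RR' dest!: subsetD)
    qed
  next
    fix K assume K: "closed K" "K \<subseteq> U"
    show "\<exists>K'. m K = m K' \<and> closed K' \<and> K' \<subseteq> R -` U"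
    proof (intro exI conjI)
      show "m K = m (R -` K)" using m_vimage[of K] by simp
      show "closed (R -` K)" using closed_vimage[OF K(1) cont(1)] .
      show "R -` K \<subseteq> R -` U" using K(2) by auto
    qed
  qed
  then show ?thesis by (simp add: inner_reg_def)
qed

lemma outer_reg_vimage: "outer_reg (R -` A) = outer_reg A"
proof -
  have RR': "R (R' y) = y" "R' (R y) = y" for y
    using homeomorphism_apply2[OF homeo] homeomorphism_apply1[OF homeo] by simp_all
  have cont: "continuous_on UNIV R" "continuous_on UNIV R'"
    using homeomorphism_cont1[OF homeo] homeomorphism_cont2[OF homeo] .
  have "{inner_reg V |V. open V \<and> R -` A \<subseteq> V} = {inner_reg V |V. open V \<and> A \<subseteq> V}"
  proof (intro equalityI subsetI; clarify)
    fix V assume V: "open V" "R -` A \<subseteq> V"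
    show "\<exists>V'. inner_reg V = inner_reg V' \<and> open V' \<and> A \<subseteq> V'"
    proof (intro exI conjI)
      have "R -` (R' -` V) = V" by (auto simp: RR')
      then show "inner_reg V = inner_reg (R' -` V)" using inner_reg_vimage[of "R' -` V"] by simp
      show "open (R' -` V)" using open_vimage[OF V(1) cont(2)] .
      show "A \<subseteq> R' -` V" using V(2) by (auto simp: RR' dest!: subsetD)
    qed
  next
    fix V assume V: "open V" "A \<subseteq> V"
    show "\<exists>V'. inner_reg V = inner_reg V' \<and> open V' \<and> R -` A \<subseteq> V'"
    proof (intro exI conjI)
      show "inner_reg V = inner_reg (R -` V)" using inner_reg_vimage[of V] by simp
      show "open (R -` V)" using open_vimage[OF V(1) cont(1)] .
      show "R -` A \<subseteq> R -` V" using V(2) by auto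
    qed
  qed
  then show ?thesis by (simp add: outer_reg_def)
qed

end

end

lemma krylov_bogolyubov:
  fixes R :: "'a::t4_space \<Rightarrow> 'a"
  assumes "compact (UNIV :: 'a set)" and "homeomorphism UNIV UNIV R R'"
  shows "inv_measures R \<noteq> {}"
proof -
  obtain m :: "'a set \<Rightarrow> real" where m: "\<And>A. 0 \<le> m A" "m UNIV = 1"
    "\<And>A B. A \<inter> B = {} \<Longrightarrow> m (A \<union> B) = m A + m B" "\<And>A. m (R -` A) = m A"
    using invariant_finitely_additive_mean[of R] by blast
  interpret finitely_additive_prob m using m assms(1) by unfold_locales auto
  have "R \<in> borel \<rightarrow>\<^sub>M borel"
    using assms(2) by (intro borel_measurable_continuous_onI) (simp add: homeomorphism_def)
  moreover have "emeasure regularized (R -` A) = emeasure regularized A" if "A \<in> sets borel" for A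
    using that measurable_sets_borel[OF \<open>R \<in> borel \<rightarrow>\<^sub>M borel\<close> that]
    by (simp add: emeasure_regularized outer_reg_vimage[OF assms(2) m(4)])
  ultimately have "regularized \<in> inv_measures R"
    by (intro inv_measuresI prob_space_regularized sets_regularized)
  then show ?thesis by blast
qed

section \<open>Joinings over a periodic orbit\<close>

lemma homeomorphism_funpow:
  fixes f :: "'a::topological_space \<Rightarrow> 'a"
  assumes "homeomorphism UNIV UNIV f g"
  shows "homeomorphism UNIV UNIV (f ^^ n) (g ^^ n)"
proof (induction n)
  case 0
  show ?case using homeomorphism_ident[of UNIV] by (simp add: id_def)
next
  case (Suc n)
  have "homeomorphism UNIV UNIV (f ^^ n \<circ> f) (g \<circ> g ^^ n)"
    by (rule homeomorphism_compose[OF assms Suc.IH])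
  then show ?case by (metis funpow.simps(2) funpow_Suc_right)
qed

lemma map_prod_funpow:
  fixes f :: "'a \<Rightarrow> 'a" and g :: "'b \<Rightarrow> 'b"
  shows "map_prod f g ^^ n = map_prod (f ^^ n) (g ^^ n)"
  by (induction n) (auto simp: fun_eq_iff)

lemma sum_lessThan_Suc_periodic:
  fixes f :: "nat \<Rightarrow> 'a::comm_monoid_add"
  assumes "f n = f 0"
  shows "(\<Sum>j<n. f (Suc j)) = (\<Sum>j<n. f j)"
proof (cases n)
  case (Suc k)
  have "(\<Sum>j<Suc k. f (Suc j)) = (\<Sum>j<k. f (Suc j)) + f 0" using assms Suc by simp
  also have "\<dots> = (\<Sum>j<Suc k. f j)" by (simp only: sum.lessThan_Suc_shift add.commute)
  finally show ?thesis using Suc by simp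
qed simp

lemma pair_return_eq_distr:
  fixes \<mu> :: "'a::topological_space measure" and y :: "'b::topological_space"
  assumes "sets \<mu> = sets borel" and "finite_measure \<mu>"
  shows "\<mu> \<Otimes>\<^sub>M return borel y = distr \<mu> (borel \<Otimes>\<^sub>M borel) (\<lambda>x. (x, y))"
proof (rule measure_eqI)
  interpret return: prob_space "return borel y" by (rule prob_space_return) simp
  show "sets (\<mu> \<Otimes>\<^sub>M return borel y) = sets (distr \<mu> (borel \<Otimes>\<^sub>M borel) (\<lambda>x. (x, y)))"
    using assms(1) by simp
  fix X assume "X \<in> sets (\<mu> \<Otimes>\<^sub>M return borel y)"
  then have X: "X \<in> sets (borel \<Otimes>\<^sub>M borel)" using assms(1) by simp
  have Pair: "(\<lambda>x. (x, y)) \<in> \<mu> \<rightarrow>\<^sub>M (borel \<Otimes>\<^sub>M borel)"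
    by (simp add: measurable_Pair measurable_cong_sets[OF assms(1) refl])
  have "emeasure (\<mu> \<Otimes>\<^sub>M return borel y) X = \<integral>\<^sup>+x. \<integral>\<^sup>+y'. indicator X (x, y') \<partial>return borel y \<partial>\<mu>"
    using X assms(1) by (intro return.emeasure_pair_measure) simp
  also have "\<dots> = \<integral>\<^sup>+x. indicator ((\<lambda>x. (x, y)) -` X \<inter> space \<mu>) x \<partial>\<mu>"
  proof (rule nn_integral_cong)
    fix x assume "x \<in> space \<mu>"
    have "(\<lambda>y'. indicator X (x, y') :: ennreal) \<in> borel_measurable borel"
      using X by measurable
    with \<open>x \<in> space \<mu>\<close> show "(\<integral>\<^sup>+y'. indicator X (x, y') \<partial>return borel y)
        = indicator ((\<lambda>x. (x, y)) -` X \<inter> space \<mu>) x"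
      by (subst nn_integral_return) (auto simp: indicator_def)
  qed
  also have "\<dots> = emeasure (distr \<mu> (borel \<Otimes>\<^sub>M borel) (\<lambda>x. (x, y))) X"
    using measurable_sets[OF Pair X] Pair X by (simp add: emeasure_distr)
  finally show "emeasure (\<mu> \<Otimes>\<^sub>M return borel y) X = emeasure (distr \<mu> (borel \<Otimes>\<^sub>M borel) (\<lambda>x. (x, y))) X" .
qed

lemma measurable_fst_borel [measurable]: "fst \<in> borel \<rightarrow>\<^sub>M borel"
  by (intro borel_measurable_continuous_onI continuous_on_fst continuous_on_id)

lemma measurable_snd_borel [measurable]: "snd \<in> borel \<rightarrow>\<^sub>M borel"
  by (intro borel_measurable_continuous_onI continuous_on_snd continuous_on_id)

lemma continuous_on_map_prod:
  assumes "continuous_on UNIV f" and "continuous_on UNIV g"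
  shows "continuous_on UNIV (map_prod f g)"
proof -
  have "continuous_on UNIV (\<lambda>z. (f (fst z), g (snd z)))"
    by (intro continuous_intros continuous_on_compose2[OF assms(1)]
        continuous_on_compose2[OF assms(2)]) auto
  then show ?thesis by (simp add: map_prod_def case_prod_beta')
qed

lemma ennreal_ratio_cancel:
  fixes a b :: nat and x :: ennreal
  assumes "a > 0" and "b > 0"
  shows "ennreal (real a / real b) * (of_nat b * x) / of_nat a = x"
proof -
  have "ennreal (real a / real b) * of_nat b = of_nat a"
    using assms by (simp add: ennreal_of_nat_eq_real_of_nat flip: ennreal_mult)
  then have "ennreal (real a / real b) * (of_nat b * x) = x * of_nat a"
    by (metis mult.assoc mult.commute)
  then show ?thesis using assms by (simp add: mult_divide_eq_ennreal)
qed

lemma sets_borel_snd_vimage_singleton: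
  "snd -` {y} \<in> sets (borel :: ('a::topological_space \<times> 'b::t1_space) measure)"
  by (rule measurable_sets_borel[OF measurable_snd_borel]) simp

lemma sets_borel_Times_singleton:
  fixes A :: "'a::topological_space set" and y :: "'b::t1_space"
  assumes "A \<in> sets borel"
  shows "A \<times> {y} \<in> sets borel"
proof -
  have "fst -` A \<in> sets (borel :: ('a \<times> 'b) measure)"
    by (rule measurable_sets_borel[OF measurable_fst_borel assms])
  moreover note sets_borel_snd_vimage_singleton[of y]
  moreover have "A \<times> {y} = fst -` A \<inter> snd -` {y}" by auto
  ultimately show ?thesis by (metis sets.Int)
qed

locale periodic_orbit_joining =
  fixes T :: "'a::metric_space \<Rightarrow> 'a" and T' and S :: "'b::metric_space \<Rightarrow> 'b" and S'
    and y0 :: 'b and p :: nat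
  assumes compact_X: "compact (UNIV :: 'a set)" and compact_Y: "compact (UNIV :: 'b set)"
    and homeo_T: "homeomorphism UNIV UNIV T T'" and homeo_S: "homeomorphism UNIV UNIV S S'"
    and period_pos: "p > 0" and periodic: "(S ^^ p) y0 = y0"
begin

definition orbit :: "'b set" where
  "orbit = (\<lambda>j. (S ^^ j) y0) ` {..<p}"

definition visits :: "'b set \<Rightarrow> nat" where
  "visits A = card {j \<in> {..<p}. (S ^^ j) y0 \<in> A}"

definition orbit_measure :: "'b measure" where
  "orbit_measure = avg_measure p (\<lambda>j. return borel ((S ^^ j) y0))"

definition lift_map :: "nat \<Rightarrow> 'a \<Rightarrow> 'a \<times> 'b" where
  "lift_map j x = ((T ^^ j) x, (S ^^ j) y0)"

definition lift :: "'a measure \<Rightarrow> ('a \<times> 'b) measure" where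
  "lift \<mu> = avg_measure p (\<lambda>j. distr \<mu> borel (lift_map j))"

lemma continuous_on_T_funpow: "continuous_on UNIV (T ^^ j)"
  using homeomorphism_cont1[OF homeomorphism_funpow[OF homeo_T]] .

lemma continuous_on_S_funpow: "continuous_on UNIV (S ^^ j)"
  using homeomorphism_cont1[OF homeomorphism_funpow[OF homeo_S]] .

lemma measurable_T_funpow [measurable]: "T ^^ j \<in> borel \<rightarrow>\<^sub>M borel"
  by (rule borel_measurable_continuous_onI[OF continuous_on_T_funpow])

lemma measurable_map_prod_funpow [measurable]: "map_prod T S ^^ j \<in> borel \<rightarrow>\<^sub>M borel"
  unfolding map_prod_funpow
  by (intro borel_measurable_continuous_onI continuous_on_map_prod continuous_on_T_funpow
      continuous_on_S_funpow)

lemma measurable_map_prod [measurable]: "map_prod T S \<in> borel \<rightarrow>\<^sub>M borel"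
  using measurable_map_prod_funpow[of 1] by simp

lemma measurable_lift_map [measurable]: "lift_map j \<in> borel \<rightarrow>\<^sub>M borel"
  unfolding lift_map_def
  by (intro borel_measurable_continuous_onI continuous_intros continuous_on_T_funpow)

lemma S_funpow_inj: "(S ^^ j) x = (S ^^ j) y \<longleftrightarrow> x = y"
  using homeomorphism_apply1[OF homeomorphism_funpow[OF homeo_S]] by (metis UNIV_I)

lemma S_inj: "S x = S y \<longleftrightarrow> x = y"
  using S_funpow_inj[of 1] by simp

lemma sum_indicator_orbit: "(\<Sum>j<p. indicator A ((S ^^ j) y0) :: ennreal) = of_nat (visits A)"
  by (simp add: indicator_def visits_def Int_def)

lemma emeasure_orbit_measure:
  assumes "A \<in> sets borel"
  shows "emeasure orbit_measure A = of_nat (visits A) / of_nat p"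
  using assms period_pos
  by (simp add: orbit_measure_def emeasure_avg_measure subprob_space_return sum_indicator_orbit)

lemma sets_orbit_measure [simp]: "sets orbit_measure = sets borel"
  by (simp add: orbit_measure_def)

lemma visits_vimage_S: "visits (S -` A) = visits A"
proof -
  have "of_nat (visits B) = (\<Sum>j<p. of_bool ((S ^^ j) y0 \<in> B) :: nat)" for B
    by (simp add: visits_def Int_def)
  moreover have "(S ^^ j) y0 \<in> S -` A \<longleftrightarrow> (S ^^ Suc j) y0 \<in> A" for j
    by simp
  moreover have "(\<Sum>j<p. of_bool ((S ^^ Suc j) y0 \<in> A) :: nat) = (\<Sum>j<p. of_bool ((S ^^ j) y0 \<in> A))"
    using periodic by (intro sum_lessThan_Suc_periodic) simp
  ultimately show ?thesis by simp
qed

lemma visits_orbit_point: "visits {(S ^^ j) y0} = visits {y0}"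
proof (induction j)
  case (Suc j)
  have "S -` {(S ^^ Suc j) y0} = {(S ^^ j) y0}"
    by (auto simp: S_inj)
  then show ?case using visits_vimage_S[of "{(S ^^ Suc j) y0}"] Suc by simp
qed simp

lemma visits_y0_pos: "visits {y0} > 0"
proof -
  have "0 \<in> {j \<in> {..<p}. (S ^^ j) y0 \<in> {y0}}" using period_pos by simp
  moreover have "finite {j \<in> {..<p}. (S ^^ j) y0 \<in> {y0}}" by simp
  ultimately show ?thesis unfolding visits_def using card_gt_0_iff by blast
qed

lemma sum_along_orbit:
  fixes g :: "'b \<Rightarrow> 'c::comm_semiring_1"
  shows "(\<Sum>j<p. g ((S ^^ j) y0)) = of_nat (visits {y0}) * (\<Sum>y\<in>orbit. g y)"
proof -
  have fibre_sum: "(\<Sum>j\<in>{j \<in> {..<p}. (S ^^ j) y0 = y}. g ((S ^^ j) y0)) = of_nat (visits {y}) * g y"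
    for y
  proof -
    have "(\<Sum>j\<in>{j \<in> {..<p}. (S ^^ j) y0 = y}. g ((S ^^ j) y0))
        = (\<Sum>j\<in>{j \<in> {..<p}. (S ^^ j) y0 = y}. g y)"
      by (rule sum.cong) auto
    then show ?thesis by (simp add: visits_def)
  qed
  have "(\<Sum>j<p. g ((S ^^ j) y0))
      = (\<Sum>y\<in>orbit. \<Sum>j\<in>{j \<in> {..<p}. (S ^^ j) y0 = y}. g ((S ^^ j) y0))"
    unfolding orbit_def by (rule sum.image_gen) simp
  also have "\<dots> = (\<Sum>y\<in>orbit. of_nat (visits {y}) * g y)"
    by (simp only: fibre_sum)
  also have "\<dots> = (\<Sum>y\<in>orbit. of_nat (visits {y0}) * g y)"
    by (rule sum.cong) (auto simp: orbit_def visits_orbit_point)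
  finally show ?thesis by (simp add: sum_distrib_left)
qed

lemma sets_lift [simp]: "sets (lift \<mu>) = sets borel"
  by (simp add: lift_def)

context
  fixes \<mu> :: "'a measure"
  assumes prob_\<mu>: "prob_space \<mu>" and sets_\<mu>: "sets \<mu> = sets borel"
begin

lemma prob_space_distr_lift_map: "prob_space (distr \<mu> borel (lift_map j))"
  by (intro prob_space.prob_space_distr[OF prob_\<mu>])
    (simp add: measurable_cong_sets[OF sets_\<mu> refl])

lemma prob_space_lift: "prob_space (lift \<mu>)"
  unfolding lift_def using period_pos prob_space_distr_lift_map
  by (intro prob_space_avg_measure) simp_all

lemma emeasure_lift:
  assumes "A \<in> sets borel"
  shows "emeasure (lift \<mu>) A = (\<Sum>j<p. emeasure \<mu> (lift_map j -` A)) / of_nat p"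
  using assms period_pos prob_space_distr_lift_map
  by (simp add: lift_def emeasure_avg_measure prob_space_imp_subprob_space
      emeasure_distr_borel[OF sets_\<mu>])

lemma distr_snd_lift: "distr (lift \<mu>) borel snd = orbit_measure"
proof (rule measure_eqI)
  fix A :: "'b set" assume "A \<in> sets (distr (lift \<mu>) borel snd)"
  then have A: "A \<in> sets borel" by simp
  have point_mass: "emeasure \<mu> (lift_map j -` snd -` A) = indicator A ((S ^^ j) y0)" for j
    using prob_space.emeasure_space_1[OF prob_\<mu>] sets_eq_imp_space_eq[OF sets_\<mu>]
    by (simp add: lift_map_def indicator_def vimage_def)
  have "emeasure (distr (lift \<mu>) borel snd) A = emeasure (lift \<mu>) (snd -` A)"
    using A by (simp add: emeasure_distr_borel)
  also have "\<dots> = (\<Sum>j<p. emeasure \<mu> (lift_map j -` snd -` A)) / of_nat p"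
    by (rule emeasure_lift[OF measurable_sets_borel[OF measurable_snd_borel A]])
  also have "\<dots> = emeasure orbit_measure A"
    by (simp add: point_mass sum_indicator_orbit emeasure_orbit_measure[OF A])
  finally show "emeasure (distr (lift \<mu>) borel snd) A = emeasure orbit_measure A" .
qed simp

lemma distr_pair_return_eq_distr_lift_map:
  "distr (\<mu> \<Otimes>\<^sub>M return borel y0) borel (map_prod T S ^^ j) = distr \<mu> borel (lift_map j)"
proof -
  have "map_prod T S ^^ j \<in> (borel \<Otimes>\<^sub>M borel) \<rightarrow>\<^sub>M borel"
    using measurable_map_prod_funpow
    by (simp add: measurable_cong_sets[OF sets_pair_borel_compact[OF compact_X compact_Y] refl])
  moreover have "(\<lambda>x. (x, y0)) \<in> \<mu> \<rightarrow>\<^sub>M (borel \<Otimes>\<^sub>M borel)"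
    by (simp add: measurable_Pair measurable_cong_sets[OF sets_\<mu> refl])
  moreover have "(map_prod T S ^^ j) \<circ> (\<lambda>x. (x, y0)) = lift_map j"
    by (simp add: fun_eq_iff lift_map_def map_prod_funpow)
  ultimately show ?thesis
    using prob_space.finite_measure[OF prob_\<mu>]
    by (simp add: pair_return_eq_distr[OF sets_\<mu>] distr_distr)
qed

end

lemma lift_in_inv_measures:
  assumes \<mu>: "\<mu> \<in> inv_measures (T ^^ p)"
  shows "lift \<mu> \<in> inv_measures (map_prod T S)"
proof (rule inv_measuresI)
  note \<mu>_props = inv_measuresD[OF \<mu>]
  show "prob_space (lift \<mu>)" by (rule prob_space_lift[OF \<mu>_props(1,2)])
  fix A :: "('a \<times> 'b) set" assume A: "A \<in> sets borel"
  have "lift_map p -` A = (T ^^ p) -` (lift_map 0 -` A)"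
    using periodic by (auto simp: lift_map_def)
  then have "emeasure \<mu> (lift_map p -` A) = emeasure \<mu> (lift_map 0 -` A)"
    using emeasure_vimage_inv_measures[OF \<mu> measurable_T_funpow] measurable_sets_borel[OF measurable_lift_map A]
    by simp
  then have "(\<Sum>j<p. emeasure \<mu> (lift_map (Suc j) -` A)) = (\<Sum>j<p. emeasure \<mu> (lift_map j -` A))"
    by (rule sum_lessThan_Suc_periodic)
  moreover have "lift_map j -` (map_prod T S -` A) = lift_map (Suc j) -` A" for j
    by (auto simp: lift_map_def funpow_swap1)
  ultimately show "emeasure (lift \<mu>) (map_prod T S -` A) = emeasure (lift \<mu>) A"
    using A measurable_sets_borel[OF measurable_map_prod A]
    by (simp add: emeasure_lift[OF \<mu>_props(1,2)])
qed simp_all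

text \<open>For a joining \<open>m\<close> the fibre over \<open>y0\<close> has mass \<open>visits {y0} / p\<close>, whence the
  normalising factor.\<close>

definition fibre :: "('a \<times> 'b) measure \<Rightarrow> 'a measure" where
  "fibre m = scale_measure (ennreal (real p / real (visits {y0})))
     (distr (density m (indicator (UNIV \<times> {y0}))) borel fst)"

lemma sets_fibre [simp]: "sets (fibre m) = sets borel"
  by (simp add: fibre_def)

context
  fixes m :: "('a \<times> 'b) measure"
  assumes m_inv: "m \<in> inv_measures (map_prod T S)" and m_snd: "distr m borel snd = orbit_measure"
begin

lemma emeasure_snd_vimage:
  assumes "B \<in> sets borel"
  shows "emeasure m (snd -` B) = emeasure orbit_measure B"
  using emeasure_distr_borel[OF inv_measuresD(2)[OF m_inv] measurable_snd_borel assms] m_snd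
  by simp

lemma emeasure_fibre:
  assumes A: "A \<in> sets borel"
  shows "emeasure (fibre m) A = ennreal (real p / real (visits {y0})) * emeasure m (A \<times> {y0})"
proof -
  note m_props = inv_measuresD[OF m_inv]
  have Y0: "UNIV \<times> {y0} \<in> sets (borel :: ('a \<times> 'b) measure)"
    by (rule sets_borel_Times_singleton) simp
  have fst_A: "fst -` A \<in> sets m"
    using measurable_sets_borel[OF measurable_fst_borel A] m_props(2) by simp
  have "emeasure (distr (density m (indicator (UNIV \<times> {y0}))) borel fst) A
      = emeasure (density m (indicator (UNIV \<times> {y0}))) (fst -` A)"
    using A m_props(2) by (simp add: emeasure_distr_borel)
  also have "\<dots> = \<integral>\<^sup>+ z. indicator (UNIV \<times> {y0}) z * indicator (fst -` A) z \<partial>m"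
    using Y0 fst_A m_props(2) by (simp add: emeasure_density measurable_cong_sets[OF m_props(2) refl])
  also have "\<dots> = \<integral>\<^sup>+ z. indicator (A \<times> {y0}) z \<partial>m"
    by (rule nn_integral_cong) (auto simp: indicator_def)
  also have "\<dots> = emeasure m (A \<times> {y0})"
    using sets_borel_Times_singleton[OF A, of y0] m_props(2) by (simp add: nn_integral_indicator)
  finally show ?thesis by (simp add: fibre_def)
qed

lemma fibre_in_inv_measures: "fibre m \<in> inv_measures (T ^^ p)"
proof (rule inv_measuresI)
  note m_props = inv_measuresD[OF m_inv]
  have "(UNIV :: 'a set) \<times> {y0} = snd -` {y0}" by auto
  then have "emeasure m (UNIV \<times> {y0}) = emeasure orbit_measure {y0}"
    using emeasure_snd_vimage[OF borel_closed[OF closed_singleton], of y0] by (simp only:)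
  also have "\<dots> = of_nat (visits {y0}) / of_nat p"
    by (simp add: emeasure_orbit_measure)
  moreover have "ennreal (real p / real (visits {y0})) * (of_nat (visits {y0}) / of_nat p) = 1"
    using ennreal_ratio_cancel[OF period_pos visits_y0_pos, of 1]
    by (simp only: mult_1_right ennreal_times_divide)
  ultimately have "emeasure (fibre m) UNIV = 1"
    by (simp add: emeasure_fibre)
  then show "prob_space (fibre m)"
    using sets_eq_imp_space_eq[OF sets_fibre] by (intro prob_spaceI) simp
  fix A :: "'a set" assume A: "A \<in> sets borel"
  have "(S ^^ p) y = y0 \<longleftrightarrow> y = y0" for y
    using S_funpow_inj[of p y y0] periodic by simp
  then have "((T ^^ p) -` A) \<times> {y0} = (map_prod T S ^^ p) -` (A \<times> {y0})"
    by (simp add: map_prod_funpow set_eq_iff)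
  then show "emeasure (fibre m) ((T ^^ p) -` A) = emeasure (fibre m) A"
    using A measurable_sets_borel[OF measurable_T_funpow A] sets_borel_Times_singleton[OF A, of y0]
    by (simp add: emeasure_fibre emeasure_funpow_vimage_inv_measures[OF m_inv measurable_map_prod])
qed simp_all

lemma emeasure_fibre_lift_map_vimage:
  assumes B: "B \<in> sets borel"
  shows "emeasure (fibre m) (lift_map j -` B)
    = ennreal (real p / real (visits {y0})) * emeasure m (B \<inter> snd -` {(S ^^ j) y0})"
proof -
  have B_fibre: "B \<inter> snd -` {(S ^^ j) y0} \<in> sets borel"
    by (rule sets.Int[OF B sets_borel_snd_vimage_singleton])
  have "(lift_map j -` B) \<times> {y0} = (map_prod T S ^^ j) -` (B \<inter> snd -` {(S ^^ j) y0})"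
    by (auto simp: map_prod_funpow lift_map_def S_funpow_inj)
  then have "emeasure (fibre m) (lift_map j -` B) = ennreal (real p / real (visits {y0}))
      * emeasure m ((map_prod T S ^^ j) -` (B \<inter> snd -` {(S ^^ j) y0}))"
    using emeasure_fibre[OF measurable_sets_borel[OF measurable_lift_map B]] by simp
  then show ?thesis
    by (simp only: emeasure_funpow_vimage_inv_measures[OF m_inv measurable_map_prod B_fibre])
qed

lemma emeasure_eq_sum_orbit_fibres:
  assumes B: "B \<in> sets borel"
  shows "emeasure m B = (\<Sum>y\<in>orbit. emeasure m (B \<inter> snd -` {y}))"
proof -
  note m_props = inv_measuresD[OF m_inv]
  have fin: "finite orbit" by (simp add: orbit_def)
  then have "closed orbit" by (rule finite_imp_closed)
  then have "orbit \<in> sets borel" "- orbit \<in> sets borel" by (auto intro: borel_closed borel_comp)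
  then have orbit_borel: "snd -` orbit \<in> sets borel" "snd -` (- orbit) \<in> sets borel"
    using measurable_sets_borel[OF measurable_snd_borel] by blast+
  have "visits (- orbit) = 0" by (simp add: visits_def orbit_def)
  then have "snd -` (- orbit) \<in> null_sets m"
    using orbit_borel(2) m_props(2) emeasure_snd_vimage[OF \<open>- orbit \<in> sets borel\<close>]
    by (simp add: null_sets_def emeasure_orbit_measure[OF \<open>- orbit \<in> sets borel\<close>])
  then have "B \<inter> snd -` (- orbit) \<in> null_sets m"
    using B m_props(2) by (auto intro: null_sets_subset)
  moreover have "B = (B \<inter> snd -` orbit) \<union> (B \<inter> snd -` (- orbit))" by auto
  ultimately have "emeasure m B = emeasure m (B \<inter> snd -` orbit)"
    using B orbit_borel(1) m_props(2) by (metis emeasure_Un_null_set sets.Int)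
  also have "B \<inter> snd -` orbit = (\<Union>y\<in>orbit. B \<inter> snd -` {y})" by auto
  also have "emeasure m \<dots> = (\<Sum>y\<in>orbit. emeasure m (B \<inter> snd -` {y}))"
    using fin B m_props(2) measurable_sets_borel[OF measurable_snd_borel borel_closed[OF closed_singleton]]
    by (intro sum_emeasure[symmetric]) (auto simp: disjoint_family_on_def)
  finally show ?thesis .
qed

lemma lift_fibre: "lift (fibre m) = m"
proof (rule measure_eqI)
  note fibre_props = inv_measuresD[OF fibre_in_inv_measures]
  show "sets (lift (fibre m)) = sets m" using inv_measuresD(2)[OF m_inv] by simp
  fix B assume "B \<in> sets (lift (fibre m))"
  then have B: "B \<in> sets borel" by simp
  define g where "g y = emeasure m (B \<inter> snd -` {y})" for y
  have "emeasure (lift (fibre m)) B = (\<Sum>j<p. emeasure (fibre m) (lift_map j -` B)) / of_nat p"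
    by (rule emeasure_lift[OF fibre_props(1,2) B])
  also have "\<dots> = ennreal (real p / real (visits {y0})) * (\<Sum>j<p. g ((S ^^ j) y0)) / of_nat p"
    by (simp add: emeasure_fibre_lift_map_vimage[OF B] g_def sum_distrib_left)
  also have "\<dots> = (\<Sum>y\<in>orbit. g y)"
    using period_pos visits_y0_pos by (simp add: sum_along_orbit ennreal_ratio_cancel)
  also have "\<dots> = emeasure m B"
    by (simp add: g_def emeasure_eq_sum_orbit_fibres[OF B])
  finally show "emeasure (lift (fibre m)) B = emeasure m B" .
qed

end

theorem joinings_eq_lift_image:
  "{m \<in> inv_measures (map_prod T S). distr m borel snd = orbit_measure} = lift ` inv_measures (T ^^ p)"
proof (intro equalityI subsetI)
  fix m assume "m \<in> {m \<in> inv_measures (map_prod T S). distr m borel snd = orbit_measure}"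
  then have "m \<in> inv_measures (map_prod T S)" "distr m borel snd = orbit_measure" by simp_all
  then show "m \<in> lift ` inv_measures (T ^^ p)"
    using lift_fibre fibre_in_inv_measures by (metis image_eqI)
next
  fix m assume "m \<in> lift ` inv_measures (T ^^ p)"
  then obtain \<mu> where \<mu>: "\<mu> \<in> inv_measures (T ^^ p)" and "m = lift \<mu>" by blast
  then show "m \<in> {m \<in> inv_measures (map_prod T S). distr m borel snd = orbit_measure}"
    using lift_in_inv_measures[OF \<mu>] distr_snd_lift[OF inv_measuresD(1,2)[OF \<mu>]] by simp
qed

lemma integral_lift_ge_INF:
  fixes f :: "'a \<times> 'b \<Rightarrow> real"
  assumes f: "continuous_on UNIV f" and \<mu>: "prob_space \<mu>" "sets \<mu> = sets borel"
  shows "integral\<^sup>L (lift \<mu>) f \<ge> (INF x. (\<Sum>j<p. f ((T ^^ j) x, (S ^^ j) y0)) / real p)"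
proof -
  interpret \<mu>: prob_space \<mu> by (rule \<mu>(1))
  have "compact (range f)"
    using compact_continuous_image[OF f] compact_Times[OF compact_X compact_Y] by simp
  then have "bounded (range f)" by (rule compact_imp_bounded)
  then obtain B where B: "\<And>z. \<bar>f z\<bar> \<le> B" unfolding bounded_real by blast
  have f_borel: "f \<in> borel_measurable borel" using f by (rule borel_measurable_continuous_onI)
  define h where "h x = (\<Sum>j<p. f (lift_map j x)) / real p" for x
  have h_bound: "\<bar>h x\<bar> \<le> B" for x
  proof -
    have "\<bar>\<Sum>j<p. f (lift_map j x)\<bar> \<le> (\<Sum>j<p. B)"
      by (rule order_trans[OF sum_abs sum_mono]) (rule B)
    then show ?thesis using period_pos by (simp add: h_def abs_divide field_simps)
  qed
  have f_lift_map: "(\<lambda>x. f (lift_map j x)) \<in> borel_measurable \<mu>" for j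
    using measurable_comp[OF measurable_lift_map f_borel] by (simp add: measurable_cong_sets[OF \<mu>(2) refl] comp_def)
  have integrable: "integrable \<mu> (\<lambda>x. f (lift_map j x))" for j
    using B f_lift_map by (intro \<mu>.integrable_const_bound[where B=B]) auto
  have "integral\<^sup>L (lift \<mu>) f = (\<Sum>j<p. integral\<^sup>L (distr \<mu> borel (lift_map j)) f) / p"
    unfolding lift_def
    using period_pos prob_space_distr_lift_map[OF \<mu>] f_borel B by (intro integral_avg_measure) auto
  also have "\<dots> = (\<Sum>j<p. \<integral>x. f (lift_map j x) \<partial>\<mu>) / p"
    using f_borel by (simp add: integral_distr measurable_cong_sets[OF \<mu>(2) refl])
  also have "\<dots> = integral\<^sup>L \<mu> h"
    unfolding h_def[abs_def] using integrable by (simp add: Bochner_Integration.integral_sum)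
  also have "\<dots> \<ge> (INF x. h x)"
  proof (rule \<mu>.integral_ge_const)
    show "integrable \<mu> h"
      unfolding h_def using integrable by (intro integrable_divide integrable_sum) auto
    have "- B \<le> h x" for x using h_bound[of x] by linarith
    then have "bdd_below (range h)" by (intro bdd_belowI[of _ "-B"]) auto
    then show "AE x in \<mu>. (INF x. h x) \<le> h x" by (auto intro: cINF_lower)
  qed
  finally show ?thesis by (simp add: h_def lift_map_def)
qed

lemma psi_orbit_measure_ge:
  fixes f :: "'a \<times> 'b \<Rightarrow> real"
  assumes "continuous_on UNIV f"
  shows "psi T S f orbit_measure \<ge> (INF x. (\<Sum>j<p. f ((T ^^ j) x, (S ^^ j) y0)) / real p)"
proof -
  have "{integral\<^sup>L m f |m. m \<in> inv_measures (map_prod T S) \<and> distr m borel snd = orbit_measure}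
      = (\<lambda>m. integral\<^sup>L m f) ` {m \<in> inv_measures (map_prod T S). distr m borel snd = orbit_measure}"
    by blast
  also have "\<dots> = (\<lambda>\<mu>. integral\<^sup>L (lift \<mu>) f) ` inv_measures (T ^^ p)"
    by (simp add: joinings_eq_lift_image image_image)
  finally have "{integral\<^sup>L m f |m. m \<in> inv_measures (map_prod T S) \<and> distr m borel snd = orbit_measure}
      = (\<lambda>\<mu>. integral\<^sup>L (lift \<mu>) f) ` inv_measures (T ^^ p)" .
  moreover have "inv_measures (T ^^ p) \<noteq> {}"
    by (rule krylov_bogolyubov[OF compact_X homeomorphism_funpow[OF homeo_T]])
  ultimately show ?thesis
    unfolding psi_def
    using integral_lift_ge_INF[OF assms inv_measuresD(1,2)] by (intro cInf_greatest) auto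
qed

end

theorem lemma2p11:
  fixes T :: "'a::metric_space \<Rightarrow> 'a" and S :: "'b::metric_space \<Rightarrow> 'b"
    and y0 :: 'b and s0 :: nat and \<nu> :: "'b measure"
  assumes "tds T" and "tds S"
    and "s0 > 0" and "(S ^^ s0) y0 = y0"
    and "\<nu> = avg_measure s0 (\<lambda>j. return borel ((S ^^ j) y0))"
  shows "({m \<in> inv_measures (map_prod T S). distr m borel snd = \<nu>}
           = (\<lambda>\<mu>. avg_measure s0 (\<lambda>j. distr (\<mu> \<Otimes>\<^sub>M return borel y0) borel ((map_prod T S) ^^ j)))
               ` inv_measures (T ^^ s0))
         \<and> (\<forall>f :: 'a \<times> 'b \<Rightarrow> real. continuous_on UNIV f \<longrightarrow>
           psi T S f \<nu> \<ge> (INF x. (\<Sum>j<s0. f ((T ^^ j) x, (S ^^ j) y0)) / real s0))"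
proof -
  obtain T' S' where "compact (UNIV :: 'a set)" "homeomorphism UNIV UNIV T T'"
    and "compact (UNIV :: 'b set)" "homeomorphism UNIV UNIV S S'"
    using assms(1,2) unfolding tds_def by blast
  then interpret periodic_orbit_joining T T' S S' y0 s0
    using assms(3,4) by unfold_locales
  have "\<nu> = orbit_measure" by (simp add: assms(5) orbit_measure_def)
  moreover have "avg_measure s0 (\<lambda>j. distr (\<mu> \<Otimes>\<^sub>M return borel y0) borel (map_prod T S ^^ j)) = lift \<mu>"
    if "\<mu> \<in> inv_measures (T ^^ s0)" for \<mu>
    using distr_pair_return_eq_distr_lift_map[OF inv_measuresD(1,2)[OF that]] by (simp add: lift_def)
  ultimately show ?thesis
    using joinings_eq_lift_image psi_orbit_measure_ge by (simp cong: image_cong)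
qed

end
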